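(* Let $H=\sum_{i=1}^d \epsilon_i |e_i\rangle\langle e_i|$ be the Hamiltonian of a $d$-dimensional quantum system and let $\rho=\sum_{i=1}^d p_i|e_i\rangle\langle e_i|$ be a full-rank state, with $\epsilon$-$s$ ensemble $\mathcal V(\rho)=\{\boldsymbol v_i=(\epsilon_i,-\log p_i):1\le i\le d\}$. For an integer $k\ge1$ let $$\mathcal V_k(\rho)=\Big\{\tfrac1k\sum_{i=1}^d c_i\boldsymbol v_i \;:\; c_i\in\mathbb{N}\cup\{0\},\ \sum_{i=1}^d c_i=k\Big\}.$$ Then $\rho$ is $k$-passive if and only if $[\rho,H]=0$ and $\mathcal V_k(\rho)$ is a totally ordered subset of $\mathbb{R}^2$.
   Context: A state $\sigma$ of a system with Hamiltonian $K$ is passive if $\mathrm{tr}(KU\sigma U^\dagger)\ge\mathrm{tr}(K\sigma)$ for all unitaries $U$. A state $\rho$ with Hamiltonian $H$ is $k$-passive if $\rho^{\otimes k}$ is passive with respect to the Hamiltonian $\sum_{i=1}^k H_i$ on $k$ copies, where $H_i$ is $H$ acting on the $i$-th copy. In $\mathbb{R}^2$, $(x_i,y_i)\le(x_j,y_j)$ means $x_i\le x_j$ and $y_i\le y_j$; a set is totally ordered if any two of its elements are comparable under $\le$. Note $\mathcal V_k(\rho)=\frac1k\mathcal V(\rho^{\otimes k})$, the $\epsilon$-$s$ ensemble of $k$ copies divided by $k$. *)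

theory Defs
  imports "HOL-Analysis.Analysis"
begin

text \<open>Square complex matrices of dimension n are represented as functions
  nat \<Rightarrow> nat \<Rightarrow> complex; only entries with indices below n matter.\<close>

type_synonym cmat = "nat \<Rightarrow> nat \<Rightarrow> complex"

definition mmul :: "nat \<Rightarrow> cmat \<Rightarrow> cmat \<Rightarrow> cmat" where
  "mmul n A B = (\<lambda>i j. \<Sum>l<n. A i l * B l j)"

definition madd :: "cmat \<Rightarrow> cmat \<Rightarrow> cmat" where
  "madd A B = (\<lambda>i j. A i j + B i j)"

definition mzero :: cmat where
  "mzero = (\<lambda>i j. 0)"

definition mid :: cmat where
  "mid = (\<lambda>i j. if i = j then 1 else 0)"

definition adj :: "cmat \<Rightarrow> cmat" where
  "adj A = (\<lambda>i j. cnj (A j i))"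

definition mtrace :: "nat \<Rightarrow> cmat \<Rightarrow> complex" where
  "mtrace n A = (\<Sum>i<n. A i i)"

definition unitary :: "nat \<Rightarrow> cmat \<Rightarrow> bool" where
  "unitary n U \<longleftrightarrow> (\<forall>i<n. \<forall>j<n. mmul n U (adj U) i j = mid i j \<and> mmul n (adj U) U i j = mid i j)"

definition diag_mat :: "(nat \<Rightarrow> real) \<Rightarrow> cmat" where
  "diag_mat f = (\<lambda>i j. if i = j then complex_of_real (f i) else 0)"

text \<open>Passivity of state sigma w.r.t. Hamiltonian K on an n-dimensional space:
  tr(K U sigma U^dagger) \<ge> tr(K sigma) for all unitaries U (traces are real here,
  we compare real parts).\<close>
definition is_passive :: "nat \<Rightarrow> cmat \<Rightarrow> cmat \<Rightarrow> bool" where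
  "is_passive n K \<sigma> \<longleftrightarrow> (\<forall>U. unitary n U \<longrightarrow>
     Re (mtrace n (mmul n K (mmul n U (mmul n \<sigma> (adj U))))) \<ge> Re (mtrace n (mmul n K \<sigma>)))"

text \<open>Kronecker product of an (m x m) matrix A and an (n x n) matrix B, in the
  product basis |a,b> indexed by a * n + b.\<close>
definition kron :: "nat \<Rightarrow> cmat \<Rightarrow> nat \<Rightarrow> cmat \<Rightarrow> cmat" where
  "kron m A n B = (\<lambda>i j. A (i div n) (j div n) * B (i mod n) (j mod n))"

fun tpow :: "nat \<Rightarrow> cmat \<Rightarrow> nat \<Rightarrow> cmat" where
  "tpow d A 0 = mid"
| "tpow d A (Suc k) = kron (d ^ k) (tpow d A k) d A"

text \<open>The k-copy Hamiltonian sum_{i=1}^k H_i (dimension d^k).\<close>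
fun ham_sum :: "nat \<Rightarrow> cmat \<Rightarrow> nat \<Rightarrow> cmat" where
  "ham_sum d H 0 = mzero"
| "ham_sum d H (Suc k) = madd (kron (d ^ k) (ham_sum d H k) d mid) (kron (d ^ k) mid d H)"

definition k_passive :: "nat \<Rightarrow> cmat \<Rightarrow> cmat \<Rightarrow> nat \<Rightarrow> bool" where
  "k_passive d H \<rho> k \<longleftrightarrow> is_passive (d ^ k) (ham_sum d H k) (tpow d \<rho> k)"

definition commute :: "nat \<Rightarrow> cmat \<Rightarrow> cmat \<Rightarrow> bool" where
  "commute n A B \<longleftrightarrow> (\<forall>i<n. \<forall>j<n. mmul n A B i j = mmul n B A i j)"

definition Vk :: "nat \<Rightarrow> (nat \<Rightarrow> real) \<Rightarrow> (nat \<Rightarrow> real) \<Rightarrow> nat \<Rightarrow> (real \<times> real) set" where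
  "Vk d eps p k = {((\<Sum>i<d. real (c i) * eps i) / real k, (\<Sum>i<d. real (c i) * (- ln (p i))) / real k)
                   | c :: nat \<Rightarrow> nat. (\<Sum>i<d. c i) = k}"

definition le2 :: "real \<times> real \<Rightarrow> real \<times> real \<Rightarrow> bool" where
  "le2 x y \<longleftrightarrow> fst x \<le> fst y \<and> snd x \<le> snd y"

definition totally_ordered2 :: "(real \<times> real) set \<Rightarrow> bool" where
  "totally_ordered2 S \<longleftrightarrow> (\<forall>x\<in>S. \<forall>y\<in>S. le2 x y \<or> le2 y x)"

end

theory Submission
  imports Defs "HOL-Combinatorics.Permutations"
begin

text \<open>Since \<open>H\<close> and \<open>\<rho>\<close> are diagonal, so are the \<open>k\<close>-copy Hamiltonian and \<open>\<rho>\<^sup>\<otimes>\<^sup>k\<close>: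
  reading an index \<open>i < d\<^sup>k\<close> in base \<open>d\<close>, their eigenvalues are the sum \<open>E i\<close> of the
  energies and the product \<open>Q i\<close> of the populations of its digits, and commutation is
  automatic. A diagonal state is passive iff its populations never increase with the
  energy. Necessity: swapping two levels by a permutation matrix would otherwise lower the
  energy. Sufficiency: \<open>tr (K U \<sigma> U\<^sup>\<dagger>) = \<Sum>\<^sub>a E a \<Sum>\<^sub>b |U a b|\<^sup>2 q b\<close>, the matrix
  \<open>|U a b|\<^sup>2\<close> is doubly stochastic, and a doubly stochastic mixing cannot lower the energy of
  an oppositely ordered population (a rearrangement inequality, proved by a layer-cake
  decomposition). Finally the points \<open>(E i / k, - ln (Q i) / k)\<close> are exactly \<open>\<V>\<^sub>k(\<rho>)\<close>,
  the counts of each digit of \<open>i\<close> giving the coefficients \<open>c\<close>, and such a set of points is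
  totally ordered iff \<open>E\<close> and \<open>Q\<close> are oppositely ordered.\<close>

definition doubly_stochastic :: "nat \<Rightarrow> (nat \<Rightarrow> nat \<Rightarrow> real) \<Rightarrow> bool" where
  "doubly_stochastic n M \<longleftrightarrow> (\<forall>a<n. \<forall>b<n. 0 \<le> M a b)
     \<and> (\<forall>a<n. (\<Sum>b<n. M a b) = 1) \<and> (\<forall>b<n. (\<Sum>a<n. M a b) = 1)"

definition oppositely_ordered :: "nat \<Rightarrow> (nat \<Rightarrow> real) \<Rightarrow> (nat \<Rightarrow> real) \<Rightarrow> bool" where
  "oppositely_ordered n E q \<longleftrightarrow> (\<forall>a<n. \<forall>b<n. E a < E b \<longrightarrow> q b \<le> q a)"

definition mix_gain :: "nat \<Rightarrow> (nat \<Rightarrow> nat \<Rightarrow> real) \<Rightarrow> (nat \<Rightarrow> real) \<Rightarrow> (nat \<Rightarrow> real) \<Rightarrow> real" where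
  "mix_gain n M E q = (\<Sum>a<n. \<Sum>b<n. M a b * E a * (q b - q a))"

lemma mix_gain_eq:
  assumes "\<forall>a<n. (\<Sum>b<n. M a b) = 1"
  shows "mix_gain n M E q = (\<Sum>a<n. E a * ((\<Sum>b<n. M a b * q b) - q a))"
  unfolding mix_gain_def
proof (rule sum.cong)
  fix a assume "a \<in> {..<n}"
  then have "(\<Sum>b<n. M a b * E a * q a) = E a * q a"
    using assms by (simp flip: sum_distrib_right)
  then show "(\<Sum>b<n. M a b * E a * (q b - q a)) = E a * ((\<Sum>b<n. M a b * q b) - q a)"
    by (simp add: right_diff_distrib sum_subtractf sum_distrib_left mult_ac)
qed simp

lemma mix_gain_const:
  assumes "\<forall>b<n. q b = c"
  shows "mix_gain n M E q = 0"
  using assms unfolding mix_gain_def by simp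

lemma mix_gain_lincomb:
  assumes "\<forall>b<n. q b = q1 b + c * q2 b + c0"
  shows "mix_gain n M E q = mix_gain n M E q1 + c * mix_gain n M E q2"
  using assms unfolding mix_gain_def sum_distrib_left sum.distrib[symmetric]
  by (intro sum.cong refl) (simp add: algebra_simps)

lemma mix_gain_eq_centered:
  assumes M: "doubly_stochastic n M"
  shows "mix_gain n M E q = (\<Sum>a<n. (E a - \<theta>) * ((\<Sum>b<n. M a b * q b) - q a))"
proof -
  have "(\<Sum>a<n. \<Sum>b<n. M a b * q b) = (\<Sum>b<n. (\<Sum>a<n. M a b) * q b)"
    unfolding sum_distrib_right by (rule sum.swap)
  also have "\<dots> = (\<Sum>b<n. q b)"
    using M by (intro sum.cong) (simp_all add: doubly_stochastic_def)
  finally have "(\<Sum>a<n. (\<Sum>b<n. M a b * q b) - q a) = 0"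
    by (simp add: sum_subtractf)
  then show ?thesis
    using M unfolding doubly_stochastic_def
    by (simp add: mix_gain_eq left_diff_distrib sum_subtractf flip: sum_distrib_left)
qed

text \<open>Centre the energies at a value \<open>\<theta>\<close> separating \<open>E\<close> on \<open>S\<close> from \<open>E\<close> off \<open>S\<close>:
  every term of the sum in \<open>mix_gain_eq_centered\<close> is then nonnegative.\<close>
lemma mix_gain_indicator_nonneg:
  assumes M: "doubly_stochastic n M" and S: "S \<subseteq> {..<n}"
    and low: "\<forall>a\<in>S. \<forall>a'\<in>{..<n} - S. E a \<le> E a'"
  shows "0 \<le> mix_gain n M E (indicator S)"
proof (cases "S = {}")
  case True
  then show ?thesis by (simp add: mix_gain_def)
next
  case False
  define \<theta> where "\<theta> = Max (E ` S)"
  have finS: "finite S" using S finite_subset by blast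
  have E_below: "E a \<le> \<theta>" if "a \<in> S" for a
    unfolding \<theta>_def using finS that by simp
  have E_above: "\<theta> \<le> E a" if "a < n" "a \<notin> S" for a
  proof -
    have "\<theta> \<in> E ` S" unfolding \<theta>_def using finS False by simp
    then show ?thesis using low that by auto
  qed
  have "0 \<le> (E a - \<theta>) * ((\<Sum>b<n. M a b * indicator S b) - indicator S a)" if "a < n" for a
  proof -
    have "(\<Sum>b<n. M a b * indicator S b) \<le> (\<Sum>b<n. M a b)"
      using M that by (intro sum_mono) (auto simp: doubly_stochastic_def indicator_def)
    moreover have "0 \<le> (\<Sum>b<n. M a b * indicator S b)"
      using M that by (intro sum_nonneg) (auto simp: doubly_stochastic_def)
    ultimately show ?thesis
      using M that E_below[of a] E_above[of a]
      by (cases "a \<in> S") (simp_all add: doubly_stochastic_def mult_nonpos_nonpos)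
  qed
  then show ?thesis
    unfolding mix_gain_eq_centered[OF M, of _ _ \<theta>] by (intro sum_nonneg) simp
qed

text \<open>One layer of the layer-cake decomposition: if \<open>t < t'\<close> are the two least values
  of \<open>q\<close>, take \<open>q' = max q t'\<close> and \<open>U = {q \<ge> t'}\<close>.\<close>
lemma oppositely_ordered_peel_layer:
  fixes q :: "nat \<Rightarrow> real"
  assumes opp: "oppositely_ordered n E q" and several: "\<not> card (q ` {..<n}) \<le> 1"
  obtains q' U c c0 where "\<forall>b<n. q b = q' b + c * indicator U b + c0" and "0 < c"
    and "oppositely_ordered n E q'" and "card (q' ` {..<n}) < card (q ` {..<n})"
    and "U \<subseteq> {..<n}" and "\<forall>a\<in>U. \<forall>a'\<in>{..<n} - U. E a \<le> E a'"
proof -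
  define T where "T = q ` {..<n}"
  define t where "t = Min T"
  define t' where "t' = Min (T - {t})"
  have finT: "finite T" unfolding T_def by simp
  have "T \<noteq> {}" using several unfolding T_def by auto
  then have t_in: "t \<in> T" unfolding t_def using finT by simp
  have t_le: "t \<le> v" if "v \<in> T" for v unfolding t_def using finT that by simp
  have "T - {t} \<noteq> {}"
  proof
    assume "T - {t} = {}"
    then have "card T \<le> card {t}" using card_mono[of "{t}" T] by blast
    then show False using several unfolding T_def by simp
  qed
  then have t'_in: "t' \<in> T - {t}" unfolding t'_def using finT by (intro Min_in) simp_all
  have t_less: "t < t'" using t'_in t_le[of t'] by auto
  have low_or_high: "q b = t \<or> t' \<le> q b" if "b < n" for b
  proof -
    have "q b \<in> T" unfolding T_def using that by simp
    then show ?thesis unfolding t'_def using Min_le[of "T - {t}" "q b"] finT by blast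
  qed
  define U where "U = {b. b < n \<and> t' \<le> q b}"
  define q' where "q' b = max (q b) t'" for b
  show ?thesis
  proof
    show "\<forall>b<n. q b = q' b + (t' - t) * indicator U b + (t - t')"
      using low_or_high t_less by (auto simp: q'_def U_def indicator_def)
    show "oppositely_ordered n E q'"
      using opp unfolding oppositely_ordered_def q'_def by (meson max.mono order_refl)
    have "q' b \<in> T - {t}" if "b < n" for b
      using low_or_high[OF that] t_less t'_in that unfolding q'_def T_def by (auto simp: max_def)
    then have "card (q' ` {..<n}) \<le> card (T - {t})" using finT by (intro card_mono) auto
    then show "card (q' ` {..<n}) < card (q ` {..<n})"
      using card_Diff1_less[OF finT t_in] unfolding T_def by linarith
    show "\<forall>a\<in>U. \<forall>a'\<in>{..<n} - U. E a \<le> E a'"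
    proof (intro ballI leI notI)
      fix a a' assume a: "a \<in> U" and a': "a' \<in> {..<n} - U" and "E a' < E a"
      then have "q a \<le> q a'" using opp unfolding oppositely_ordered_def U_def by auto
      moreover have "q a' = t" using low_or_high a' unfolding U_def by auto
      ultimately show False using a t_less unfolding U_def by auto
    qed
  qed (use t_less in \<open>auto simp: U_def\<close>)
qed

lemma mix_gain_nonneg:
  assumes M: "doubly_stochastic n M"
  shows "oppositely_ordered n E q \<Longrightarrow> 0 \<le> mix_gain n M E q"
proof (induction "card (q ` {..<n})" arbitrary: q rule: less_induct)
  case less
  show ?case
  proof (cases "card (q ` {..<n}) \<le> 1")
    case True
    have "\<forall>x\<in>q ` {..<n}. \<forall>y\<in>q ` {..<n}. x = y"
      using True by (simp only: One_nat_def card_le_Suc0_iff_eq[OF finite_imageI[OF finite_lessThan]])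
    then have "\<forall>b<n. q b = q 0" by (metis gr_implies_not0 imageI lessThan_iff not_gr0)
    then have "mix_gain n M E q = 0" by (rule mix_gain_const)
    then show ?thesis by simp
  next
    case False
    obtain q' U c c0 where decomp: "\<forall>b<n. q b = q' b + c * indicator U b + c0"
      and "0 < c" and opp': "oppositely_ordered n E q'"
      and fewer: "card (q' ` {..<n}) < card (q ` {..<n})"
      and U: "U \<subseteq> {..<n}" "\<forall>a\<in>U. \<forall>a'\<in>{..<n} - U. E a \<le> E a'"
      by (rule oppositely_ordered_peel_layer[OF less.prems False])
    have "0 \<le> mix_gain n M E q'" by (rule less.hyps[OF fewer opp'])
    moreover have "0 \<le> c * mix_gain n M E (indicator U)"
      using \<open>0 < c\<close> mix_gain_indicator_nonneg[OF M U] by simp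
    ultimately show ?thesis unfolding mix_gain_lincomb[OF decomp] by simp
  qed
qed

lemma doubly_stochastic_rearrangement:
  assumes "doubly_stochastic n M" and "oppositely_ordered n E q"
  shows "(\<Sum>a<n. E a * q a) \<le> (\<Sum>a<n. E a * (\<Sum>b<n. M a b * q b))"
proof -
  have "mix_gain n M E q = (\<Sum>a<n. E a * (\<Sum>b<n. M a b * q b)) - (\<Sum>a<n. E a * q a)"
    using assms(1) unfolding doubly_stochastic_def
    by (simp add: mix_gain_eq right_diff_distrib sum_subtractf)
  then show ?thesis using mix_gain_nonneg[OF assms] by simp
qed

lemma mult_cnj_self: "z * cnj z = complex_of_real ((cmod z)\<^sup>2)"
  using complex_norm_square[of z] by simp

lemma unitary_doubly_stochastic:
  assumes "unitary n U"
  shows "doubly_stochastic n (\<lambda>a b. (cmod (U a b))\<^sup>2)"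
proof -
  have rows: "(\<Sum>b<n. (cmod (U a b))\<^sup>2) = 1" if "a < n" for a
  proof -
    have "mmul n U (adj U) a a = 1" using assms that unfolding unitary_def mid_def by auto
    then have "complex_of_real (\<Sum>b<n. (cmod (U a b))\<^sup>2) = 1"
      unfolding mmul_def adj_def of_real_sum by (simp add: mult_cnj_self)
    then show ?thesis by (simp only: of_real_eq_1_iff)
  qed
  have cols: "(\<Sum>a<n. (cmod (U a b))\<^sup>2) = 1" if "b < n" for b
  proof -
    have "mmul n (adj U) U b b = 1" using assms that unfolding unitary_def mid_def by auto
    then have "complex_of_real (\<Sum>a<n. (cmod (U a b))\<^sup>2) = 1"
      unfolding mmul_def adj_def of_real_sum by (simp add: mult_cnj_self mult.commute)
    then show ?thesis by (simp only: of_real_eq_1_iff)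
  qed
  show ?thesis unfolding doubly_stochastic_def using rows cols by simp
qed

lemma mmul_diag_mat_left:
  "a < n \<Longrightarrow> mmul n (diag_mat f) X a c = complex_of_real (f a) * X a c"
  unfolding mmul_def diag_mat_def by (simp add: if_distrib if_distribR sum.delta cong del: if_weak_cong)

lemma Re_trace_diag_conj:
  "Re (mtrace n (mmul n (diag_mat E) (mmul n U (mmul n (diag_mat q) (adj U)))))
     = (\<Sum>a<n. E a * (\<Sum>b<n. (cmod (U a b))\<^sup>2 * q b))"
proof -
  have "mmul n U (mmul n (diag_mat q) (adj U)) a a
      = complex_of_real (\<Sum>b<n. (cmod (U a b))\<^sup>2 * q b)" for a
    unfolding mmul_def[of n U] of_real_sum
    by (intro sum.cong refl) (simp add: mmul_diag_mat_left adj_def mult_cnj_self mult_ac)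
  then show ?thesis
    unfolding mtrace_def by (simp add: mmul_diag_mat_left flip: of_real_sum of_real_mult)
qed

lemma Re_trace_diag_diag:
  "Re (mtrace n (mmul n (diag_mat E) (diag_mat q))) = (\<Sum>a<n. E a * q a)"
proof -
  have "mmul n (diag_mat E) (diag_mat q) a a = complex_of_real (E a * q a)" if "a < n" for a
    using that by (simp add: mmul_diag_mat_left) (simp add: diag_mat_def)
  then show ?thesis unfolding mtrace_def by (simp flip: of_real_sum)
qed

definition perm_mat :: "(nat \<Rightarrow> nat) \<Rightarrow> cmat" where
  "perm_mat \<sigma> = (\<lambda>i j. if j = \<sigma> i then 1 else 0)"

lemma unitary_perm_mat:
  assumes \<sigma>: "\<sigma> permutes {..<n}"
  shows "unitary n (perm_mat \<sigma>)"
  unfolding unitary_def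
proof (intro allI impI conjI)
  fix i j assume i: "i < n" and j: "j < n"
  have \<sigma>_lt: "\<sigma> i < n" using permutes_in_image[OF \<sigma>] i by simp
  have "mmul n (perm_mat \<sigma>) (adj (perm_mat \<sigma>)) i j = (\<Sum>l<n. if l = \<sigma> i then mid i j else 0)"
    unfolding mmul_def perm_mat_def adj_def mid_def
    using permutes_inj[OF \<sigma>] by (intro sum.cong refl) (auto dest: injD)
  then show "mmul n (perm_mat \<sigma>) (adj (perm_mat \<sigma>)) i j = mid i j"
    using \<sigma>_lt by simp
  have inv_lt: "inv \<sigma> i < n" using permutes_in_image[OF permutes_inv[OF \<sigma>]] i by simp
  have "mmul n (adj (perm_mat \<sigma>)) (perm_mat \<sigma>) i j = (\<Sum>l<n. if l = inv \<sigma> i then mid i j else 0)"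
    unfolding mmul_def perm_mat_def adj_def mid_def
    by (intro sum.cong refl) (auto simp: permutes_inverses[OF \<sigma>])
  then show "mmul n (adj (perm_mat \<sigma>)) (perm_mat \<sigma>) i j = mid i j"
    using inv_lt by simp
qed

lemma Re_trace_diag_perm:
  assumes "\<sigma> permutes {..<n}"
  shows "Re (mtrace n (mmul n (diag_mat E) (mmul n (perm_mat \<sigma>) (mmul n (diag_mat q) (adj (perm_mat \<sigma>))))))
     = (\<Sum>a<n. E a * q (\<sigma> a))"
  unfolding Re_trace_diag_conj
proof (rule sum.cong)
  fix a assume "a \<in> {..<n}"
  then have "\<sigma> a < n" using permutes_in_image[OF assms] by simp
  moreover have "(cmod (perm_mat \<sigma> a b))\<^sup>2 * q b = (if b = \<sigma> a then q b else 0)" for b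
    unfolding perm_mat_def by simp
  ultimately show "E a * (\<Sum>b<n. (cmod (perm_mat \<sigma> a b))\<^sup>2 * q b) = E a * q (\<sigma> a)"
    by simp
qed simp

lemma is_passive_diag_iff:
  "is_passive n (diag_mat E) (diag_mat q) \<longleftrightarrow> oppositely_ordered n E q"
proof
  assume P: "is_passive n (diag_mat E) (diag_mat q)"
  show "oppositely_ordered n E q"
    unfolding oppositely_ordered_def
  proof (intro allI impI leI notI)
    fix a b assume a: "a < n" and b: "b < n" and "E a < E b" and "q a < q b"
    let ?\<tau> = "Transposition.transpose a b"
    have \<tau>: "?\<tau> permutes {..<n}" using a b by (intro permutes_swap_id) simp_all
    have "(\<Sum>x<n. E x * q x) \<le> (\<Sum>x<n. E x * q (?\<tau> x))"
      using P[unfolded is_passive_def, rule_format, OF unitary_perm_mat[OF \<tau>]]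
      unfolding Re_trace_diag_diag Re_trace_diag_perm[OF \<tau>] .
    then have "0 \<le> (\<Sum>x<n. E x * q (?\<tau> x)) - (\<Sum>x<n. E x * q x)" by simp
    also have "\<dots> = (\<Sum>x\<in>{a, b}. E x * (q (?\<tau> x) - q x))"
      unfolding sum_subtractf[symmetric] right_diff_distrib[symmetric]
      using a b by (intro sum.mono_neutral_right) auto
    also have "\<dots> = - ((E b - E a) * (q b - q a))"
      using \<open>E a < E b\<close> by (simp add: sum.insert_if algebra_simps)
    also have "\<dots> < 0"
      using \<open>E a < E b\<close> \<open>q a < q b\<close> by simp
    finally show False by simp
  qed
next
  assume "oppositely_ordered n E q"
  then show "is_passive n (diag_mat E) (diag_mat q)"
    unfolding is_passive_def Re_trace_diag_conj Re_trace_diag_diag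
    using doubly_stochastic_rearrangement unitary_doubly_stochastic by blast
qed

fun tensor_prod :: "nat \<Rightarrow> (nat \<Rightarrow> real) \<Rightarrow> nat \<Rightarrow> nat \<Rightarrow> real" where
  "tensor_prod d f 0 i = 1"
| "tensor_prod d f (Suc k) i = tensor_prod d f k (i div d) * f (i mod d)"

fun tensor_sum :: "nat \<Rightarrow> (nat \<Rightarrow> real) \<Rightarrow> nat \<Rightarrow> nat \<Rightarrow> real" where
  "tensor_sum d f 0 i = 0"
| "tensor_sum d f (Suc k) i = tensor_sum d f k (i div d) + f (i mod d)"

lemma kron_diag_mat:
  "kron m (diag_mat f) n (diag_mat g) = diag_mat (\<lambda>i. f (i div n) * g (i mod n))"
proof (intro ext)
  fix i j
  have "i div n = j div n \<and> i mod n = j mod n \<longleftrightarrow> i = j"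
    by (metis div_mult_mod_eq)
  then show "kron m (diag_mat f) n (diag_mat g) i j = diag_mat (\<lambda>i. f (i div n) * g (i mod n)) i j"
    unfolding kron_def diag_mat_def by auto
qed

lemma mid_eq_diag_mat: "mid = diag_mat (\<lambda>_. 1)"
  unfolding mid_def diag_mat_def by (intro ext) simp

lemma mzero_eq_diag_mat: "mzero = diag_mat (\<lambda>_. 0)"
  unfolding mzero_def diag_mat_def by (intro ext) simp

lemma madd_diag_mat: "madd (diag_mat f) (diag_mat g) = diag_mat (\<lambda>i. f i + g i)"
  unfolding madd_def diag_mat_def by (intro ext) simp

lemma tpow_diag_mat: "tpow d (diag_mat f) k = diag_mat (tensor_prod d f k)"
  by (induction k) (simp_all add: mid_eq_diag_mat kron_diag_mat)

lemma ham_sum_diag_mat: "ham_sum d (diag_mat f) k = diag_mat (tensor_sum d f k)"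
  by (induction k) (simp_all add: mzero_eq_diag_mat mid_eq_diag_mat kron_diag_mat madd_diag_mat)

lemma commute_diag_mat: "commute n (diag_mat f) (diag_mat g)"
  unfolding commute_def by (simp add: mmul_diag_mat_left) (simp add: diag_mat_def)

lemma tensor_prod_pos:
  assumes "0 < d" and "\<forall>j<d. 0 < f j"
  shows "0 < tensor_prod d f k i"
  by (induction k arbitrary: i) (simp_all add: assms)

lemma minus_ln_tensor_prod:
  assumes "0 < d" and "\<forall>j<d. 0 < f j"
  shows "- ln (tensor_prod d f k i) = tensor_sum d (\<lambda>j. - ln (f j)) k i"
proof (induction k arbitrary: i)
  case (Suc k)
  have "0 < f (i mod d)" using assms by simp
  then show ?case using Suc tensor_prod_pos[OF assms, of k "i div d"] by (simp add: ln_mult)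
qed simp

fun digit_count :: "nat \<Rightarrow> nat \<Rightarrow> nat \<Rightarrow> nat \<Rightarrow> nat" where
  "digit_count d 0 i = (\<lambda>_. 0)"
| "digit_count d (Suc k) i = (\<lambda>j. digit_count d k (i div d) j + of_bool (j = i mod d))"

lemma tensor_sum_digit_count:
  assumes "0 < d"
  shows "tensor_sum d f k i = (\<Sum>j<d. real (digit_count d k i j) * f j)"
  by (induction k arbitrary: i) (simp_all add: assms distrib_right sum.distrib)

lemma sum_digit_count:
  assumes "0 < d"
  shows "(\<Sum>j<d. digit_count d k i j) = k"
  by (induction k arbitrary: i) (simp_all add: assms sum.distrib)

lemma digit_count_surj:
  "(\<Sum>j<d. c j) = k \<Longrightarrow> \<exists>i<d ^ k. \<forall>j<d. digit_count d k i j = c j"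
proof (induction k arbitrary: c)
  case 0
  then show ?case by auto
next
  case (Suc k)
  have "\<exists>j0<d. 0 < c j0"
  proof (rule ccontr)
    assume "\<not> (\<exists>j0<d. 0 < c j0)"
    then have "(\<Sum>j<d. c j) = 0" by simp
    with Suc.prems show False by simp
  qed
  then obtain j0 where j0: "j0 < d" "0 < c j0" by blast
  define c' where "c' = c(j0 := c j0 - 1)"
  have "(\<Sum>j<d. c' j) = k"
    using Suc.prems j0 unfolding c'_def by (simp add: sum.remove[of _ j0])
  then obtain i' where i': "i' < d ^ k" "\<forall>j<d. digit_count d k i' j = c' j"
    using Suc.IH by blast
  define i where "i = i' * d + j0"
  have "i < d ^ Suc k"
  proof -
    have "i < (i' + 1) * d" unfolding i_def using j0 by simp
    also have "\<dots> \<le> d ^ k * d" using i'(1) by (intro mult_right_mono) simp_all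
    finally show ?thesis by (simp add: mult.commute)
  qed
  moreover have "i div d = i'" "i mod d = j0" unfolding i_def using j0 by simp_all
  ultimately show ?case
    using i'(2) j0 by (intro exI[of _ i]) (auto simp: c'_def)
qed

lemma Vk_eq_image:
  assumes "0 < d" and "\<forall>j<d. 0 < p j"
  shows "Vk d eps p k
    = (\<lambda>i. (tensor_sum d eps k i / real k, - ln (tensor_prod d p k i) / real k)) ` {..<d ^ k}"
proof -
  define v where "v c = ((\<Sum>j<d. real (c j) * eps j) / real k,
    (\<Sum>j<d. real (c j) * - ln (p j)) / real k)" for c :: "nat \<Rightarrow> nat"
  have v_cong: "v c = v c'" if "\<forall>j<d. c j = c' j" for c c'
    unfolding v_def using that by simp
  have image_eq: "(tensor_sum d eps k i / real k, - ln (tensor_prod d p k i) / real k)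
      = v (digit_count d k i)" for i
    unfolding v_def using assms by (simp add: minus_ln_tensor_prod tensor_sum_digit_count)
  have "Vk d eps p k = v ` {c. (\<Sum>j<d. c j) = k}"
    unfolding Vk_def v_def by blast
  also have "\<dots> = (\<lambda>i. v (digit_count d k i)) ` {..<d ^ k}"
  proof
    show "v ` {c. (\<Sum>j<d. c j) = k} \<subseteq> (\<lambda>i. v (digit_count d k i)) ` {..<d ^ k}"
    proof
      fix x assume "x \<in> v ` {c. (\<Sum>j<d. c j) = k}"
      then obtain c where c: "(\<Sum>j<d. c j) = k" "x = v c" by blast
      then obtain i where "i < d ^ k" "\<forall>j<d. digit_count d k i j = c j"
        using digit_count_surj by blast
      then show "x \<in> (\<lambda>i. v (digit_count d k i)) ` {..<d ^ k}"
        using c(2) v_cong[of "digit_count d k i" c] by (intro rev_image_eqI[of i]) simp_all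
    qed
    show "(\<lambda>i. v (digit_count d k i)) ` {..<d ^ k} \<subseteq> v ` {c. (\<Sum>j<d. c j) = k}"
      using sum_digit_count[OF assms(1)] by blast
  qed
  finally show ?thesis by (simp only: image_eq)
qed

lemma totally_ordered2_image_iff:
  "totally_ordered2 ((\<lambda>i. (f i, g i)) ` A) \<longleftrightarrow> (\<forall>a\<in>A. \<forall>b\<in>A. f a < f b \<longrightarrow> g a \<le> g b)"
proof -
  have "le2 (f a, g a) (f b, g b) \<or> le2 (f b, g b) (f a, g a)
      \<longleftrightarrow> (f a < f b \<longrightarrow> g a \<le> g b) \<and> (f b < f a \<longrightarrow> g b \<le> g a)" for a b
    unfolding le2_def by auto
  then show ?thesis unfolding totally_ordered2_def by auto
qed

theorem lemma2:
  fixes d k :: nat and eps p :: "nat \<Rightarrow> real"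
  assumes "d \<ge> 1" and "k \<ge> 1"
    and "\<forall>i<d. p i > 0" and "(\<Sum>i<d. p i) = 1"
  shows "k_passive d (diag_mat eps) (diag_mat p) k \<longleftrightarrow>
           commute d (diag_mat p) (diag_mat eps) \<and> totally_ordered2 (Vk d eps p k)"
proof -
  define E where "E = tensor_sum d eps k"
  define Q where "Q = tensor_prod d p k"
  have d: "0 < d" using assms(1) by simp
  have k: "0 < real k" using assms(2) by simp
  have Q_pos: "0 < Q i" for i unfolding Q_def using tensor_prod_pos[OF d assms(3)] .
  have "k_passive d (diag_mat eps) (diag_mat p) k \<longleftrightarrow> oppositely_ordered (d ^ k) E Q"
    unfolding k_passive_def tpow_diag_mat ham_sum_diag_mat is_passive_diag_iff E_def Q_def ..
  also have "\<dots> \<longleftrightarrow> (\<forall>a\<in>{..<d ^ k}. \<forall>b\<in>{..<d ^ k}.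
      E a / real k < E b / real k \<longrightarrow> - ln (Q a) / real k \<le> - ln (Q b) / real k)"
    unfolding oppositely_ordered_def using k Q_pos by (simp add: Ball_def divide_less_cancel divide_le_cancel)
  also have "\<dots> \<longleftrightarrow> totally_ordered2 (Vk d eps p k)"
    unfolding Vk_eq_image[OF d assms(3)] totally_ordered2_image_iff E_def Q_def ..
  finally show ?thesis using commute_diag_mat by simp
qed

end
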